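(* For every $\epsilon\in(-\tfrac12,\tfrac12)$ and all partitions $p,p'$ of $n$, if $p'\le p$ in the dominance order then $|v_\epsilon(p)|\le|v_\epsilon(p')|$, where $|\cdot|$ is the Euclidean norm on $\mathbb R^n$.
   Context: For a partition $p=[p_1,p_2,p_3,\dots]$ of $n$ ($p_1\ge p_2\ge\cdots$), dominance order: $p'\le p$ iff $\sum_{i\le j}p'_i\le\sum_{i\le j}p_i$ for all $j$. For $\epsilon\in(-\frac12,\frac12)$ define $v_\epsilon(p)\in(\epsilon+\mathbb Z)^n$ as the weakly decreasing rearrangement of the $n$-tuple containing, when $\epsilon\ge0$: $\epsilon$ with multiplicity $p_1$, $\epsilon-1$ with multiplicity $p_2$, $\epsilon+1$ with multiplicity $p_3$, $\epsilon-2$ with multiplicity $p_4$, $\epsilon+2$ with multiplicity $p_5$, and so on; when $\epsilon<0$: $\epsilon$ with multiplicity $p_1$, $\epsilon+1$ with multiplicity $p_2$, $\epsilon-1$ with multiplicity $p_3$, $\epsilon+2$ with multiplicity $p_4$, $\epsilon-2$ with multiplicity $p_5$, and so on. *)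

theory Defs
  imports Complex_Main
begin

definition is_partition :: "nat \<Rightarrow> nat list \<Rightarrow> bool" where
  "is_partition n p \<longleftrightarrow> sorted_wrt (\<ge>) p \<and> (\<forall>x\<in>set p. 0 < x) \<and> sum_list p = n"

text \<open>Dominance order: p' \<le> p iff all partial sums of p' are bounded by those of p
  (parts beyond the length are 0, which take handles).\<close>
definition dominated :: "nat list \<Rightarrow> nat list \<Rightarrow> bool" where
  "dominated p' p \<longleftrightarrow> (\<forall>j. sum_list (take j p') \<le> sum_list (take j p))"

definition offset :: "real \<Rightarrow> nat \<Rightarrow> int" where
  "offset eps i = (let d = (if even i then int (i div 2) else - int ((i + 1) div 2))
                   in if eps \<ge> 0 then d else - d)"

definition v_eps :: "real \<Rightarrow> nat list \<Rightarrow> real list" where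
  "v_eps eps p = rev (sort (concat (map (\<lambda>i. replicate (p ! i) (eps + of_int (offset eps i)))
                                       [0..<length p])))"

definition eucl_norm :: "real list \<Rightarrow> real" where
  "eucl_norm v = sqrt (sum_list (map (\<lambda>x. x\<^sup>2) v))"

end

theory Submission
  imports Defs "HOL-Library.Multiset" "HOL-Library.More_List"
begin

text \<open>The squared norm of \<open>v_eps eps p\<close> is \<open>\<Sum>\<^sub>i p\<^sub>i c\<^sub>i\<close> with
  \<open>c\<^sub>i = (eps + offset eps i)\<^sup>2\<close>. Since \<open>\<bar>eps\<bar> < 1/2\<close>, the absolute values
  \<open>\<bar>eps\<bar>, 1 - \<bar>eps\<bar>, 1 + \<bar>eps\<bar>, 2 - \<bar>eps\<bar>, \<dots>\<close> increase, so \<open>c\<close> is nondecreasing.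
  Summation by parts writes \<open>\<Sum>\<^sub>i p\<^sub>i c\<^sub>i\<close> as \<open>n\<close> times the last weight minus
  \<open>\<Sum>\<^sub>j (p\<^sub>1 + \<dots> + p\<^sub>j) (c\<^sub>j\<^sub>+\<^sub>1 - c\<^sub>j)\<close>, which has nonnegative coefficients and is
  therefore monotone in the dominance order.\<close>

lemma sum_list_take_eq_sum_nth_default:
  "sum_list (take j xs) = (\<Sum>i<j. nth_default 0 xs i)"
  by (induction j) (auto simp: take_Suc_conv_app_nth nth_default_def)

lemma sum_list_map_concat_replicate:
  "sum_list (map h (concat (map (\<lambda>i. replicate (k i) (a i)) xs))) =
    (\<Sum>i\<leftarrow>xs. of_nat (k i) * h (a i))"
  by (induction xs) (simp_all add: sum_list_replicate)

lemma sum_list_map_eq_if_mset_eq: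
  fixes f :: "'a \<Rightarrow> 'b::comm_monoid_add"
  assumes "mset xs = mset ys"
  shows "sum_list (map f xs) = sum_list (map f ys)"
  using assms by (metis mset_map sum_mset_sum_list)

lemma summation_by_parts:
  fixes f :: "nat \<Rightarrow> 'a::comm_ring"
  shows "(\<Sum>i<L. f i * c i) =
    (\<Sum>i<L. f i) * c L - (\<Sum>j<L. (\<Sum>i<Suc j. f i) * (c (Suc j) - c j))"
  by (induction L) (simp_all add: algebra_simps)

lemma weighted_sum_le_if_partial_sums_le:
  fixes f g :: "nat \<Rightarrow> 'a::linordered_idom"
  assumes partial: "\<And>j. (\<Sum>i<j. g i) \<le> (\<Sum>i<j. f i)"
    and total: "(\<Sum>i<L. g i) = (\<Sum>i<L. f i)"
    and "mono c"
  shows "(\<Sum>i<L. f i * c i) \<le> (\<Sum>i<L. g i * c i)"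
proof -
  have "(\<Sum>i<Suc j. g i) * (c (Suc j) - c j) \<le> (\<Sum>i<Suc j. f i) * (c (Suc j) - c j)" for j
    using partial[of "Suc j"] monoD[OF \<open>mono c\<close>, of j "Suc j"]
    by (simp del: sum.lessThan_Suc add: mult_right_mono)
  then have "(\<Sum>j<L. (\<Sum>i<Suc j. g i) * (c (Suc j) - c j))
        \<le> (\<Sum>j<L. (\<Sum>i<Suc j. f i) * (c (Suc j) - c j))"
    by (rule sum_mono)
  then show ?thesis
    unfolding summation_by_parts[of f c L] summation_by_parts[of g c L] total by simp
qed

lemma abs_eps_plus_offset:
  assumes "\<bar>eps\<bar> < 1/2"
  shows "\<bar>eps + of_int (offset eps i)\<bar> =
    (if even i then real (i div 2) + \<bar>eps\<bar> else real ((i + 1) div 2) - \<bar>eps\<bar>)"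
  using assms by (auto simp: offset_def abs_if)

lemma mono_square_eps_plus_offset:
  assumes "\<bar>eps\<bar> < 1/2"
  shows "mono (\<lambda>i. (eps + of_int (offset eps i))\<^sup>2)"
proof (rule mono_iff_le_Suc[THEN iffD2], intro allI)
  fix i :: nat
  have "\<bar>eps + of_int (offset eps i)\<bar> \<le> \<bar>eps + of_int (offset eps (Suc i))\<bar>"
    using assms by (cases "even i") (auto simp: abs_eps_plus_offset elim!: evenE oddE)
  then show "(eps + of_int (offset eps i))\<^sup>2 \<le> (eps + of_int (offset eps (Suc i)))\<^sup>2"
    by (simp add: abs_le_square_iff)
qed

lemma sum_squares_v_eps:
  assumes "length p \<le> L"
  shows "(\<Sum>x\<leftarrow>v_eps eps p. x\<^sup>2) =
    (\<Sum>i<L. real (nth_default 0 p i) * (eps + of_int (offset eps i))\<^sup>2)"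
proof -
  let ?entries =
    "concat (map (\<lambda>i. replicate (p ! i) (eps + of_int (offset eps i))) [0..<length p])"
  have "mset (v_eps eps p) = mset ?entries"
    by (simp only: v_eps_def mset_rev mset_sort)
  then have "(\<Sum>x\<leftarrow>v_eps eps p. x\<^sup>2) = (\<Sum>x\<leftarrow>?entries. x\<^sup>2)"
    by (rule sum_list_map_eq_if_mset_eq)
  also have "\<dots> = (\<Sum>i\<leftarrow>[0..<length p]. real (p ! i) * (eps + of_int (offset eps i))\<^sup>2)"
    by (rule sum_list_map_concat_replicate)
  also have "\<dots> = (\<Sum>i<length p. real (nth_default 0 p i) * (eps + of_int (offset eps i))\<^sup>2)"
    unfolding interv_sum_list_conv_sum_set_nat set_upt atLeast0LessThan
    by (intro sum.cong) (auto simp: nth_default_def)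
  also have "\<dots> = (\<Sum>i<L. real (nth_default 0 p i) * (eps + of_int (offset eps i))\<^sup>2)"
    using assms by (intro sum.mono_neutral_left) (auto simp: nth_default_def)
  finally show ?thesis .
qed

theorem lemmaA6:
  fixes eps :: real and n :: nat and p p' :: "nat list"
  assumes "- (1/2) < eps" and "eps < 1/2"
    and "is_partition n p" and "is_partition n p'"
    and "dominated p' p"
  shows "eucl_norm (v_eps eps p) \<le> eucl_norm (v_eps eps p')"
proof -
  define L where "L = max (length p) (length p')"
  have partial: "(\<Sum>i<j. real (nth_default 0 p' i)) \<le> (\<Sum>i<j. real (nth_default 0 p i))" for j
    using \<open>dominated p' p\<close>
    by (simp add: dominated_def sum_list_take_eq_sum_nth_default flip: of_nat_sum)
  have total: "(\<Sum>i<L. real (nth_default 0 p' i)) = (\<Sum>i<L. real (nth_default 0 p i))"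
    using \<open>is_partition n p\<close> \<open>is_partition n p'\<close>
    by (simp add: L_def is_partition_def flip: of_nat_sum sum_list_take_eq_sum_nth_default)
  have "mono (\<lambda>i. (eps + of_int (offset eps i))\<^sup>2)"
    using assms(1,2) by (intro mono_square_eps_plus_offset) auto
  then have "(\<Sum>i<L. real (nth_default 0 p i) * (eps + of_int (offset eps i))\<^sup>2)
      \<le> (\<Sum>i<L. real (nth_default 0 p' i) * (eps + of_int (offset eps i))\<^sup>2)"
    by (rule weighted_sum_le_if_partial_sums_le[OF partial total])
  moreover have "length p \<le> L" "length p' \<le> L"
    by (simp_all add: L_def)
  ultimately show ?thesis
    by (simp add: eucl_norm_def sum_squares_v_eps)
qed

end
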